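(* Let $M=((W,\preccurlyeq,S),V)$ be a temporal equilibrium model of a temporal theory $\Gamma$ and let $\mathrm{Th}(M):=\{\varphi\mid M,(0,0)\models\varphi\}$. For every THT model $M'=((W,\preccurlyeq,S),V')$, if $M',(0,0)\models\Gamma\cup\{\neg\varphi\mid\varphi\notin\mathrm{Th}(M)\}$, then $V((i,1))=V'((i,1))=V'((i,0))$ for all $i\ge0$.
   Context: Fix a countable set $\mathbb{P}$ of atoms. Temporal formulas: $\varphi ::= p\mid\bot\mid\varphi\wedge\varphi\mid\varphi\vee\varphi\mid\varphi\to\varphi\mid\circ\varphi\mid\varphi\,\mathsf{U}\,\varphi\mid\varphi\,\mathsf{R}\,\varphi$; $\neg\varphi:=\varphi\to\bot$. The THT frame is $W=\mathbb{N}\times\{0,1\}$, $(i,h)\preccurlyeq(j,t)$ iff $i=j$ and $h\le t$, $S((i,k))=(i+1,k)$. A THT model is $((W,\preccurlyeq,S),V)$ with $V:W\to2^{\mathbb{P}}$ and $V((i,0))\subseteq V((i,1))$. Satisfaction: $M,w\models p$ iff $p\in V(w)$; $\bot$ never; $\wedge,\vee$ pointwise; $M,w\models\varphi\to\psi$ iff for all $v\succcurlyeq w$, $M,v\models\varphi$ implies $M,v\models\psi$; $M,w\models\circ\varphi$ iff $M,S(w)\models\varphi$; $\varphi\,\mathsf{U}\,\psi$: some $k\ge0$ with $M,S^k(w)\models\psi$ and $M,S^i(w)\models\varphi$ for all $0\le i<k$; $\varphi\,\mathsf{R}\,\psi$: for all $k\ge0$, $M,S^k(w)\models\psi$ or $M,S^i(w)\models\varphi$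 for some $0\le i<k$. $M$ is total if $V((i,0))=V((i,1))$ for all $i$. $M'\le M$ iff $V'((i,1))=V((i,1))$ and $V'((i,0))\subseteq V((i,0))$ for all $i$; $M'<M$ iff $M'\le M$ and $V'\neq V$. A temporal equilibrium model of $\Gamma$ is a total THT model $M$ with $M,(0,0)\models\Gamma$ such that no THT model $M'<M$ has $M',(0,0)\models\Gamma$. *)

theory Defs
  imports Main "HOL-Library.Countable"
begin

datatype 'a tform =
    Atom 'a
  | Bot
  | And "'a tform" "'a tform"
  | Or "'a tform" "'a tform"
  | Imp "'a tform" "'a tform"
  | Next "'a tform"
  | Until "'a tform" "'a tform"
  | Release "'a tform" "'a tform"

definition Neg :: "'a tform \<Rightarrow> 'a tform" where
  "Neg \<phi> = Imp \<phi> Bot"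

text \<open>Worlds of the fixed THT frame W = nat x {0,1}: a world is a pair (i,h) with
  h :: bool, False standing for 0 (here) and True for 1 (there).
  (i,h) \<preccurlyeq> (j,t) iff i = j and h \<le> t; S (i,k) = (i+1,k).\<close>
type_synonym world = "nat \<times> bool"

definition prec :: "world \<Rightarrow> world \<Rightarrow> bool" where
  "prec w v \<longleftrightarrow> fst w = fst v \<and> snd w \<le> snd v"

definition succ :: "world \<Rightarrow> world" where
  "succ w = (Suc (fst w), snd w)"

text \<open>A model is given by its valuation V : W \<Rightarrow> 2^P (the frame is fixed).\<close>
type_synonym 'a valuation = "world \<Rightarrow> 'a set"

definition tht_model :: "'a valuation \<Rightarrow> bool" where
  "tht_model V \<longleftrightarrow> (\<forall>i. V (i, False) \<subseteq> V (i, True))"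

fun sat :: "'a valuation \<Rightarrow> world \<Rightarrow> 'a tform \<Rightarrow> bool" where
  "sat V w (Atom p) = (p \<in> V w)"
| "sat V w Bot = False"
| "sat V w (And \<phi> \<psi>) = (sat V w \<phi> \<and> sat V w \<psi>)"
| "sat V w (Or \<phi> \<psi>) = (sat V w \<phi> \<or> sat V w \<psi>)"
| "sat V w (Imp \<phi> \<psi>) = (\<forall>v. prec w v \<longrightarrow> sat V v \<phi> \<longrightarrow> sat V v \<psi>)"
| "sat V w (Next \<phi>) = sat V (succ w) \<phi>"
| "sat V w (Until \<phi> \<psi>) =
     (\<exists>k. sat V ((succ ^^ k) w) \<psi> \<and> (\<forall>i<k. sat V ((succ ^^ i) w) \<phi>))"
| "sat V w (Release \<phi> \<psi>) =
     (\<forall>k. sat V ((succ ^^ k) w) \<psi> \<or> (\<exists>i<k. sat V ((succ ^^ i) w) \<phi>))"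

definition sat_set :: "'a valuation \<Rightarrow> world \<Rightarrow> 'a tform set \<Rightarrow> bool" where
  "sat_set V w \<Gamma> \<longleftrightarrow> (\<forall>\<phi>\<in>\<Gamma>. sat V w \<phi>)"

definition total :: "'a valuation \<Rightarrow> bool" where
  "total V \<longleftrightarrow> (\<forall>i. V (i, False) = V (i, True))"

definition model_le :: "'a valuation \<Rightarrow> 'a valuation \<Rightarrow> bool" where
  "model_le V' V \<longleftrightarrow> (\<forall>i. V' (i, True) = V (i, True) \<and> V' (i, False) \<subseteq> V (i, False))"

definition model_less :: "'a valuation \<Rightarrow> 'a valuation \<Rightarrow> bool" where
  "model_less V' V \<longleftrightarrow> model_le V' V \<and> V' \<noteq> V"

definition temporal_equilibrium_model :: "'a valuation \<Rightarrow> 'a tform set \<Rightarrow> bool" where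
  "temporal_equilibrium_model V \<Gamma> \<longleftrightarrow>
     tht_model V \<and> total V \<and> sat_set V (0, False) \<Gamma> \<and>
     \<not> (\<exists>V'. tht_model V' \<and> model_less V' V \<and> sat_set V' (0, False) \<Gamma>)"

definition Th :: "'a valuation \<Rightarrow> 'a tform set" where
  "Th V = {\<phi>. sat V (0, False) \<phi>}"

end

theory Submission
  imports Defs
begin

text \<open>For an atom p and a time i, whichever of the formulas Next^i p and Neg (Next^i p) fails in the
  total model M lies outside Th(M); its negation holds in M' at (0,0) and hence at (0,1),
  so M' agrees with M on all there-worlds. As M' satisfies \<Gamma>, this makes M' \<le> M, and the
  minimality of the equilibrium model forces M' = M, which is total.\<close>

lemma succ_funpow: "(succ ^^ k) (i, h) = (i + k, h)"
  by (induction k) (auto simp: succ_def)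

lemma sat_Next_funpow: "sat V w ((Next ^^ k) \<phi>) = sat V ((succ ^^ k) w) \<phi>"
proof (induction k arbitrary: w)
  case (Suc k)
  have "sat V w ((Next ^^ Suc k) \<phi>) = sat V ((succ ^^ k) (succ w)) \<phi>"
    by (simp add: Suc.IH)
  also have "(succ ^^ k) (succ w) = (succ ^^ Suc k) w"
    by (simp only: funpow_Suc_right comp_def)
  finally show ?case .
qed simp

lemma sat_Next_funpow_Atom: "sat V (0, h) ((Next ^^ i) (Atom p)) \<longleftrightarrow> p \<in> V (i, h)"
  by (simp add: sat_Next_funpow succ_funpow)

lemma sat_Neg_here:
  "sat V (i, False) (Neg \<phi>) \<longleftrightarrow> \<not> sat V (i, False) \<phi> \<and> \<not> sat V (i, True) \<phi>"
proof -
  have "prec (i, False) v \<longleftrightarrow> v = (i, False) \<or> v = (i, True)" for v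
    by (cases v) (auto simp: prec_def)
  then show ?thesis
    by (auto simp: Neg_def)
qed

lemma sat_Neg_there: "sat V (i, True) (Neg \<phi>) \<longleftrightarrow> \<not> sat V (i, True) \<phi>"
  by (auto simp: Neg_def prec_def)

lemma there_eq_if_sat_Neg_compl_Th:
  fixes V V' :: "'a valuation"
  assumes "total V"
    and Neg_compl_Th: "\<And>\<phi>. \<phi> \<notin> Th V \<Longrightarrow> sat V' (0, False) (Neg \<phi>)"
  shows "V' (i, True) = V (i, True)"
proof (rule set_eqI)
  fix p :: 'a
  let ?\<phi> = "(Next ^^ i) (Atom p)"
  have V_here_there: "V (i, False) = V (i, True)"
    using \<open>total V\<close> by (simp add: total_def)
  show "p \<in> V' (i, True) \<longleftrightarrow> p \<in> V (i, True)"
  proof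
    assume "p \<in> V' (i, True)"
    then have "\<not> sat V' (0, False) (Neg ?\<phi>)"
      by (simp add: sat_Neg_here sat_Next_funpow_Atom)
    then have "?\<phi> \<in> Th V"
      using Neg_compl_Th by blast
    then show "p \<in> V (i, True)"
      using V_here_there by (simp add: Th_def sat_Next_funpow_Atom)
  next
    assume "p \<in> V (i, True)"
    then have "Neg ?\<phi> \<notin> Th V"
      using V_here_there by (simp add: Th_def sat_Neg_here sat_Next_funpow_Atom)
    then have "\<not> sat V' (0, True) (Neg ?\<phi>)"
      using Neg_compl_Th sat_Neg_here by blast
    then show "p \<in> V' (i, True)"
      by (simp add: sat_Neg_there sat_Next_funpow_Atom)
  qed
qed

lemma temporal_equilibrium_model_minimal:
  assumes "temporal_equilibrium_model V \<Gamma>" and "tht_model V'" and "model_le V' V"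
    and "sat_set V' (0, False) \<Gamma>"
  shows "V' = V"
  using assms by (auto simp: temporal_equilibrium_model_def model_less_def)

theorem proposition5p1:
  fixes V V' :: "('a::countable) valuation" and \<Gamma> :: "'a tform set"
  assumes "temporal_equilibrium_model V \<Gamma>"
    and "tht_model V'"
    and "sat_set V' (0, False) (\<Gamma> \<union> {Neg \<phi> | \<phi>. \<phi> \<notin> Th V})"
  shows "\<forall>i. V (i, True) = V' (i, True) \<and> V' (i, True) = V' (i, False)"
proof -
  have "total V"
    using assms(1) by (simp add: temporal_equilibrium_model_def)
  have sat_\<Gamma>: "sat_set V' (0, False) \<Gamma>"
    using assms(3) by (simp add: sat_set_def)
  have "V' (i, True) = V (i, True)" for i
    using \<open>total V\<close> assms(3) by (intro there_eq_if_sat_Neg_compl_Th) (auto simp: sat_set_def)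
  with \<open>total V\<close> assms(2) have "model_le V' V"
    by (simp add: model_le_def tht_model_def total_def)
  with assms(1,2) sat_\<Gamma> have "V' = V"
    by (intro temporal_equilibrium_model_minimal)
  with \<open>total V\<close> show ?thesis
    by (simp add: total_def)
qed

end
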